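(* Let $v_1,\dots,v_m$ be nonzero vectors spanning $\mathbb{R}^n$ ($m\ge n$) such that $(\mathbb{R}^n,(v_i)_{i=1}^m)$ is irreducible, and let $c=(c_i)_{i=1}^m$ with $c_i>0$, $\sum_ic_i=n$. Let $D_c=\inf\{\det(\sum_i\lambda_iv_i\otimes v_i)/\prod_i\lambda_i^{c_i};\ \lambda_i>0\}$. If $(\lambda_i)_{i=1}^m$ and $(\mu_i)_{i=1}^m$ are $m$-tuples of positive numbers both attaining this infimum, then there exists $r\in\mathbb{R}$ such that $\lambda_i=r\mu_i$ for all $i$.
   Context: The relation $\bowtie$ on $\{1,\dots,m\}$: $i\bowtie j$ iff there is $K\subset\{1,\dots,m\}$ with $|K|=n-1$ such that both $(v_i,(v_k)_{k\in K})$ and $(v_j,(v_k)_{k\in K})$ are bases of $\mathbb{R}^n$. $(\mathbb{R}^n,(v_i)_{i=1}^m)$ is irreducible if any two indices are joined by a finite chain of $\bowtie$-related indices. $v\otimes v=vv^T$. *)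

theory Defs
  imports "HOL-Analysis.Analysis"
begin

definition outer :: "real^'n \<Rightarrow> real^'n^'n" where
  "outer v = (\<chi> i j. v $ i * v $ j)"

text \<open>The family (v_k) indexed by I is a basis of R^n (as a family: no repeated entries).\<close>
definition basis_family :: "(nat \<Rightarrow> real^'n) \<Rightarrow> nat set \<Rightarrow> bool" where
  "basis_family v I \<longleftrightarrow> inj_on v I \<and> independent (v ` I) \<and> span (v ` I) = UNIV"

text \<open>i bowtie j: some K of size n-1 such that (v_i,(v_k)_{k in K}) and (v_j,(v_k)_{k in K})
  are both bases.  A family with a repeated index is not a basis, hence i,j \<notin> K.\<close>
definition bowtie :: "(nat \<Rightarrow> real^'n) \<Rightarrow> nat \<Rightarrow> nat \<Rightarrow> nat \<Rightarrow> bool" where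
  "bowtie v m i j \<longleftrightarrow> (\<exists>K. K \<subseteq> {1..m} \<and> card K = CARD('n) - 1 \<and> i \<notin> K \<and> j \<notin> K \<and>
      basis_family v (insert i K) \<and> basis_family v (insert j K))"

definition irreducible_family :: "(nat \<Rightarrow> real^'n) \<Rightarrow> nat \<Rightarrow> bool" where
  "irreducible_family v m \<longleftrightarrow>
     (\<forall>i\<in>{1..m}. \<forall>j\<in>{1..m}.
        (\<lambda>a b. a \<in> {1..m} \<and> b \<in> {1..m} \<and> bowtie v m a b)\<^sup>*\<^sup>* i j)"

definition bl_ratio :: "(nat \<Rightarrow> real^'n) \<Rightarrow> nat \<Rightarrow> (nat \<Rightarrow> real) \<Rightarrow> (nat \<Rightarrow> real) \<Rightarrow> real" where
  "bl_ratio v m c lam = det (\<Sum>i\<in>{1..m}. lam i *\<^sub>R outer (v i)) / (\<Prod>i\<in>{1..m}. lam i powr c i)"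

definition D_const :: "(nat \<Rightarrow> real^'n) \<Rightarrow> nat \<Rightarrow> (nat \<Rightarrow> real) \<Rightarrow> real" where
  "D_const v m c = Inf {bl_ratio v m c lam | lam. \<forall>i\<in>{1..m}. lam i > 0}"

end

theory Submission
  imports Defs
begin

(* Write s = sqrt lam, t = sqrt mu, and let A, B, N be the matrices sum_i a_i v_i v_i^T for
   the weights s^2, t^2 and s t.  With C = N B^-1 there is the exact decomposition
   A = N B^-1 N + sum_i w_i w_i^T, where w_i = s_i v_i - t_i C v_i.  The weights s t are
   admissible in the infimum and their product term is the geometric mean of those of lam and
   mu, so minimality gives det A * det B <= (det N)^2 = det (N B^-1 N) * det B.  Adding a
   nonzero rank-one term w w^T to a positive definite matrix strictly increases its
   determinant, hence every w_i vanishes: each v_i is an eigenvector of C with eigenvalue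
   sqrt (lam_i / mu_i).  If i bowtie j via K, the span of the v_k (k in K) is a C-invariant
   hyperplane containing neither v_i nor v_j, which forces equal eigenvalues; irreducibility
   then makes lam_i / mu_i constant. *)

definition pos_def :: "real^'n^'n \<Rightarrow> bool" where
  "pos_def H \<longleftrightarrow> (\<forall>x. x \<noteq> 0 \<longrightarrow> x \<bullet> (H *v x) > 0)"

definition weighted_outer_sum ::
    "(nat \<Rightarrow> real^'n) \<Rightarrow> nat set \<Rightarrow> (nat \<Rightarrow> real) \<Rightarrow> real^'n^'n" where
  "weighted_outer_sum v I a = (\<Sum>i\<in>I. a i *\<^sub>R outer (v i))"

lemma sum_matrix_vector_mult: "(sum f S :: real^'n^'m) *v x = (\<Sum>i\<in>S. f i *v x)"
  by (induction S rule: infinite_finite_induct) (auto simp: matrix_vector_mult_add_rdistrib)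

lemma matrix_add_rdistrib: "((A::real^'n^'m) + B) ** (C::real^'k^'n) = A ** C + B ** C"
  by (vector matrix_matrix_mult_def sum.distrib[symmetric] field_simps)

lemma sum_scaleR_matrix_mult_left:
  "(\<Sum>i\<in>S. f i *\<^sub>R ((X i :: real^'n^'m) ** (T :: real^'k^'n))) = (\<Sum>i\<in>S. f i *\<^sub>R X i) ** T"
  by (induction S rule: infinite_finite_induct) (auto simp: matrix_add_rdistrib scalar_matrix_assoc)

lemma sum_scaleR_matrix_mult_right:
  "(\<Sum>i\<in>S. f i *\<^sub>R ((T :: real^'n^'m) ** (X i :: real^'k^'n))) = T ** (\<Sum>i\<in>S. f i *\<^sub>R X i)"
  by (induction S rule: infinite_finite_induct)
    (auto simp: matrix_add_ldistrib matrix_scalar_ac scalar_matrix_assoc)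

lemma outer_mult_vector: "outer v *v x = (v \<bullet> x) *\<^sub>R v"
  by (simp add: outer_def matrix_vector_mult_def vec_eq_iff inner_vec_def sum_distrib_left mult_ac)

lemma inner_outer_mult_vector: "x \<bullet> (outer v *v x) = (v \<bullet> x)\<^sup>2"
  by (simp add: outer_mult_vector power2_eq_square inner_commute)

lemma inner_weighted_outer_sum:
  "x \<bullet> (weighted_outer_sum v I a *v y) = (\<Sum>i\<in>I. a i * (v i \<bullet> x) * (v i \<bullet> y))"
  by (simp add: weighted_outer_sum_def sum_matrix_vector_mult inner_sum_right
      scaleR_matrix_vector_assoc[symmetric] outer_mult_vector mult_ac inner_commute)

lemma transpose_weighted_outer_sum:
  "transpose (weighted_outer_sum v I a) = weighted_outer_sum v I a"
  by (simp add: weighted_outer_sum_def transpose_def outer_def vec_eq_iff sum_component mult.commute)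

lemma pos_def_imp_inj:
  assumes "pos_def H" shows "inj ((*v) H)"
proof (rule injI)
  fix x y assume "H *v x = H *v y"
  then have "(x - y) \<bullet> (H *v (x - y)) = 0" by (simp add: matrix_vector_mult_diff_distrib)
  then show "x = y" using assms unfolding pos_def_def by (metis less_irrefl eq_iff_diff_eq_0)
qed

lemma pos_def_invertible: "pos_def H \<Longrightarrow> invertible H"
  using det_nz_iff_inj[of "(*v) H"]
  by (simp add: invertible_det_nz matrix_of_matrix_vector_mul pos_def_imp_inj)

lemma pos_def_det_pos:
  fixes H :: "real^'n^'n"
  assumes "pos_def H" shows "det H > 0"
proof (rule ccontr)
  \<comment> \<open>det would have to vanish somewhere on the segment from mat 1 to H, which consists
    of positive definite, hence invertible, matrices\<close>
  define F where "F t = (1 - t) *\<^sub>R mat 1 + t *\<^sub>R H" for t :: real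
  have cont: "continuous_on {0..1} (\<lambda>t. det (F t))"
    unfolding det_def F_def by (intro continuous_intros)
  assume "\<not> det H > 0"
  moreover have "F 1 = H" "F 0 = mat 1" by (simp_all add: F_def)
  ultimately obtain t where t: "0 \<le> t" "t \<le> 1" "det (F t) = 0"
    using IVT2'[of "\<lambda>t. det (F t)" 1 0 0] cont by auto
  have "pos_def (F t)"
    unfolding pos_def_def
  proof (intro allI impI)
    fix x :: "real^'n" assume "x \<noteq> 0"
    then have "x \<bullet> x > 0" "x \<bullet> (H *v x) > 0" using assms pos_def_def by auto
    moreover have "x \<bullet> (F t *v x) = (1 - t) * (x \<bullet> x) + t * (x \<bullet> (H *v x))"
      by (simp add: F_def matrix_vector_mult_add_rdistrib scaleR_matrix_vector_assoc[symmetric]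
          inner_add_right)
    ultimately show "x \<bullet> (F t *v x) > 0"
      using t by (cases "t = 0") (auto intro: add_nonneg_pos)
  qed
  then show False using t pos_def_invertible invertible_det_nz by blast
qed

lemma pos_def_inverse:
  fixes H Hi :: "real^'n^'n"
  assumes "pos_def H" "H ** Hi = mat 1"
  shows "pos_def Hi"
  unfolding pos_def_def
proof (intro allI impI)
  fix x :: "real^'n" assume "x \<noteq> 0"
  have "H *v (Hi *v x) = x" using assms(2) by (simp add: matrix_vector_mul_assoc)
  moreover from this have "Hi *v x \<noteq> 0" using \<open>x \<noteq> 0\<close> by auto
  ultimately show "x \<bullet> (Hi *v x) > 0"
    using assms(1) unfolding pos_def_def by (metis inner_commute)
qed

lemma pos_def_congruence:
  fixes P Q :: "real^'n^'n"
  assumes "pos_def P" "inj ((*v) Q)"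
  shows "pos_def (transpose Q ** P ** Q)"
  unfolding pos_def_def
proof (intro allI impI)
  fix x :: "real^'n" assume "x \<noteq> 0"
  then have "Q *v x \<noteq> 0" using assms(2) by (metis injD matrix_vector_mult_0_right)
  then have "(Q *v x) \<bullet> (P *v (Q *v x)) > 0" using assms(1) pos_def_def by blast
  moreover have "x \<bullet> ((transpose Q ** P ** Q) *v x) = (Q *v x) \<bullet> (P *v (Q *v x))"
    by (metis dot_lmul_matrix inner_commute matrix_vector_mul_assoc transpose_matrix_vector)
  ultimately show "x \<bullet> ((transpose Q ** P ** Q) *v x) > 0" by simp
qed

lemma pos_def_weighted_outer_sum:
  fixes v :: "nat \<Rightarrow> real^'n"
  assumes "finite I" "span (v ` I) = UNIV" "\<forall>i\<in>I. a i > 0"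
  shows "pos_def (weighted_outer_sum v I a)"
  unfolding pos_def_def
proof (intro allI impI)
  fix x :: "real^'n" assume "x \<noteq> 0"
  have "\<exists>i\<in>I. v i \<bullet> x \<noteq> 0"
  proof (rule ccontr)
    assume "\<not> ?thesis"
    then have "orthogonal x x"
      by (intro orthogonal_to_span[of x "v ` I" x]) (auto simp: assms(2) orthogonal_def inner_commute)
    then show False using \<open>x \<noteq> 0\<close> by (simp add: orthogonal_def)
  qed
  then obtain i where "i \<in> I" "v i \<bullet> x \<noteq> 0" by blast
  then have "0 < (\<Sum>i\<in>I. a i * (v i \<bullet> x) * (v i \<bullet> x))"
    using assms(3) by (intro sum_pos2[OF assms(1)])
      (auto simp: mult.assoc not_real_square_gt_zero zero_less_mult_iff)
  then show "x \<bullet> (weighted_outer_sum v I a *v x) > 0" by (simp add: inner_weighted_outer_sum)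
qed

lemma pos_def_add_sum_outer:
  fixes H :: "real^'n^'n"
  assumes "pos_def H" shows "pos_def (H + (\<Sum>i\<in>S. outer (w i)))"
  unfolding pos_def_def
proof (intro allI impI)
  fix x :: "real^'n" assume "x \<noteq> 0"
  then have "x \<bullet> (H *v x) > 0" using assms pos_def_def by blast
  then show "x \<bullet> ((H + (\<Sum>i\<in>S. outer (w i))) *v x) > 0"
    by (simp add: matrix_vector_mult_add_rdistrib sum_matrix_vector_mult inner_sum_right
        inner_add_right inner_outer_mult_vector add_pos_nonneg sum_nonneg)
qed

lemma det_replace_row_of_identity:
  fixes w :: "real^'n"
  shows "det (\<chi> i. if i = k then w else axis i 1) = w $ k"
proof -
  have w: "w = (\<Sum>j\<in>UNIV. w $ j *s axis j 1)"
    by (simp add: vec_eq_iff sum_component axis_def if_distrib[of "\<lambda>x. _ * x"] cong: if_cong)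
  have unit_row: "det (\<chi> i. if i = k then axis j 1 else axis i (1::real)) = of_bool (j = k)"
    for j
  proof (cases "j = k")
    case True
    then have "(\<chi> i. if i = k then axis j 1 else axis i (1::real)) = mat 1"
      by (simp add: vec_eq_iff mat_def axis_def)
    then show ?thesis using True by simp
  next
    case False
    have "det (\<chi> i. if i = k then axis j 1 else axis i (1::real)) = 0"
      by (rule det_identical_rows[OF False]) (simp add: row_def vec_eq_iff False)
    then show ?thesis using False by simp
  qed
  have "det (\<chi> i. if i = k then w else axis i 1)
      = (\<Sum>j\<in>UNIV. det (\<chi> i. if i = k then w $ j *s axis j 1 else axis i (1::real)))"
    by (subst w) (rule det_linear_row_sum, simp)
  also have "\<dots> = (\<Sum>j\<in>UNIV. w $ j * of_bool (j = k))"
    by (simp only: det_row_mul unit_row)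
  finally show ?thesis by simp
qed

lemma det_rows_add_multiple_of_row:
  fixes u w :: "real^'n"
  assumes "finite T" "k \<notin> T"
  shows "det (\<chi> i. if i = k then w else if i \<in> T then axis i 1 + u$i *s w else axis i 1) = w$k"
  using assms
proof (induction T rule: finite_induct)
  case empty
  have "(\<chi> i. if i = k then w else if i \<in> {} then axis i 1 + u$i *s w else axis i 1) =
    (\<chi> i. if i = k then w else axis i (1::real))"
    by (simp add: vec_eq_iff)
  then show ?case using det_replace_row_of_identity[of k w] by simp
next
  case (insert j T)
  let ?A = "\<chi> i. if i = k then w else if i \<in> insert j T then axis i 1 + u$i *s w else axis i (1::real)"
  have "j \<noteq> k" using insert by auto
  have "(\<chi> l. if l = j then row j ?A + (- u$j) *s row k ?A else row l ?A) =
     (\<chi> i. if i = k then w else if i \<in> T then axis i 1 + u$i *s w else axis i 1)"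
  proof (rule vec_eq_iff[THEN iffD2], intro allI)
    fix i
    have "row l ?A = ?A $ l" for l by (simp add: row_def vec_lambda_eta)
    then show "(\<chi> l. if l = j then row j ?A + (- u$j) *s row k ?A else row l ?A) $ i =
      (\<chi> i. if i = k then w else if i \<in> T then axis i 1 + u$i *s w else axis i 1) $ i"
      using \<open>j \<noteq> k\<close> insert(2) by (cases "i = j"; cases "i = k") (simp_all add: vector_smult_lneg)
  qed
  moreover have "det (\<chi> l. if l = j then row j ?A + (- u$j) *s row k ?A else row l ?A) = det ?A"
    by (rule det_row_operation[OF \<open>j \<noteq> k\<close>])
  ultimately show ?case using insert by simp
qed

lemma det_identity_add_rank1_rows:
  fixes u w :: "real^'n"
  assumes "finite T"
  shows "det (\<chi> i. if i \<in> T then axis i 1 + u$i *s w else axis i 1) = 1 + (\<Sum>i\<in>T. u$i * w$i)"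
  using assms
proof (induction T rule: finite_induct)
  case empty
  have "(\<chi> i. axis i (1::real)) = (mat 1 :: real^'n^'n)" by (simp add: mat_def axis_def vec_eq_iff)
  then show ?case by simp
next
  case (insert k T)
  define c where "c i = (if i \<in> T then axis i 1 + u$i *s w else axis i (1::real))" for i
  have split_row_k: "(\<chi> i. if i \<in> insert k T then axis i 1 + u$i *s w else axis i 1) =
     (\<chi> i. if i = k then axis i 1 + u$k *s w else c i)"
    by (simp add: c_def vec_eq_iff)
  have "(\<chi> i. if i = k then axis i 1 else c i) = (\<chi> i. c i)"
    using insert(2) by (simp add: c_def vec_eq_iff)
  moreover have "det (\<chi> i. if i = k then u$k *s w else c i) = u$k * w$k"
    unfolding det_row_mul c_def using det_rows_add_multiple_of_row[OF insert(1,2)] by simp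
  ultimately show ?case
    unfolding split_row_k det_row_add using insert by (simp add: c_def)
qed

lemma det_identity_add_rank1:
  fixes u w :: "real^'n"
  shows "det (mat 1 + (\<chi> i j. u$i * w$j)) = 1 + u \<bullet> w"
proof -
  have "mat 1 + (\<chi> i j. u$i * w$j) = (\<chi> i. if i \<in> UNIV then axis i 1 + u$i *s w else axis i 1)"
    by (simp add: vec_eq_iff mat_def axis_def)
  then show ?thesis using det_identity_add_rank1_rows[of UNIV u w] by (simp add: inner_vec_def)
qed

lemma det_add_outer:
  fixes H Hi :: "real^'n^'n"
  assumes "H ** Hi = mat 1"
  shows "det (H + outer w) = det H * (1 + (Hi *v w) \<bullet> w)"
proof -
  have "H ** (\<chi> i j. (Hi *v w)$i * w$j) = (\<chi> i j. (H *v (Hi *v w))$i * w$j)"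
    by (simp add: vec_eq_iff matrix_matrix_mult_def matrix_vector_mult_def sum_distrib_right mult.assoc)
  also have "\<dots> = outer w"
    using assms by (simp add: matrix_vector_mul_assoc outer_def)
  finally have "H + outer w = H ** (mat 1 + (\<chi> i j. (Hi *v w)$i * w$j))"
    by (simp add: matrix_add_ldistrib)
  then show ?thesis by (simp add: det_mul det_identity_add_rank1)
qed

lemma det_le_det_add_outer:
  fixes H :: "real^'n^'n"
  assumes "pos_def H"
  shows "det H \<le> det (H + outer w)" and "w \<noteq> 0 \<Longrightarrow> det H < det (H + outer w)"
proof -
  obtain Hi where Hi: "H ** Hi = mat 1"
    using pos_def_invertible[OF assms] unfolding invertible_def by blast
  have "pos_def Hi" by (rule pos_def_inverse[OF assms Hi])
  then have "(Hi *v w) \<bullet> w \<ge> 0" and "w \<noteq> 0 \<Longrightarrow> (Hi *v w) \<bullet> w > 0"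
    unfolding pos_def_def by (metis inner_commute inner_zero_right order.refl order_less_imp_le)+
  moreover have "det (H + outer w) = det H * (1 + (Hi *v w) \<bullet> w)" by (rule det_add_outer[OF Hi])
  moreover have "det H > 0" by (rule pos_def_det_pos[OF assms])
  ultimately show "det H \<le> det (H + outer w)" and "w \<noteq> 0 \<Longrightarrow> det H < det (H + outer w)"
    by simp_all
qed

lemma det_le_det_add_sum_outer:
  fixes H :: "real^'n^'n"
  assumes "pos_def H" "finite S"
  shows "det H \<le> det (H + (\<Sum>i\<in>S. outer (w i)))"
  using assms(2)
proof (induction S rule: finite_induct)
  case (insert j S)
  have "det H \<le> det (H + (\<Sum>i\<in>S. outer (w i)))" by (fact insert.IH)
  also have "\<dots> \<le> det (H + (\<Sum>i\<in>S. outer (w i)) + outer (w j))"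
    by (intro det_le_det_add_outer(1) pos_def_add_sum_outer assms(1))
  finally show ?case using insert by (simp add: add_ac)
qed simp

lemma det_less_det_add_sum_outer:
  fixes H :: "real^'n^'n"
  assumes "pos_def H" "finite S" "j \<in> S" "w j \<noteq> 0"
  shows "det H < det (H + (\<Sum>i\<in>S. outer (w i)))"
proof -
  let ?H' = "H + (\<Sum>i\<in>S - {j}. outer (w i))"
  have "det H \<le> det ?H'" using assms(1,2) by (intro det_le_det_add_sum_outer) simp_all
  also have "\<dots> < det (?H' + outer (w j))"
    by (intro det_le_det_add_outer(2) pos_def_add_sum_outer assms)
  also have "?H' + outer (w j) = H + (\<Sum>i\<in>S. outer (w i))"
    using assms(2,3) by (simp add: sum.remove[of S j] add_ac)
  finally show ?thesis .
qed

lemma outer_diff_scaleR: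
  fixes C :: "real^'n^'n"
  shows "outer (a *\<^sub>R p - b *\<^sub>R (C *v p)) =
    (a * a) *\<^sub>R outer p - (a * b) *\<^sub>R (outer p ** transpose C)
    - (a * b) *\<^sub>R (C ** outer p) + (b * b) *\<^sub>R (C ** outer p ** transpose C)"
proof -
  have right: "(\<chi> i j. x$i * p$j) ** transpose C = (\<chi> i j. x$i * (C *v p)$j)" for x :: "real^'n"
    by (simp add: vec_eq_iff matrix_matrix_mult_def matrix_vector_mult_def transpose_def
        sum_distrib_left mult_ac)
  have left: "C ** outer p = (\<chi> i j. (C *v p)$i * p$j)"
    by (simp add: vec_eq_iff matrix_matrix_mult_def matrix_vector_mult_def outer_def
        sum_distrib_left sum_distrib_right mult_ac)
  show ?thesis
    unfolding left right[of p, folded outer_def] right[of "C *v p"]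
    by (simp add: outer_def vec_eq_iff algebra_simps)
qed

lemma weighted_outer_sum_residual_decomposition:
  fixes C :: "real^'n^'n"
  assumes "C ** weighted_outer_sum v I (\<lambda>i. t i * t i) = weighted_outer_sum v I (\<lambda>i. s i * t i)"
  shows "weighted_outer_sum v I (\<lambda>i. s i * s i) =
    C ** weighted_outer_sum v I (\<lambda>i. s i * t i)
    + (\<Sum>i\<in>I. outer (s i *\<^sub>R v i - t i *\<^sub>R (C *v v i)))"
proof -
  let ?N = "weighted_outer_sum v I (\<lambda>i. s i * t i)"
  have "(\<Sum>i\<in>I. outer (s i *\<^sub>R v i - t i *\<^sub>R (C *v v i))) =
      weighted_outer_sum v I (\<lambda>i. s i * s i) - ?N ** transpose C - C ** ?N
      + C ** weighted_outer_sum v I (\<lambda>i. t i * t i) ** transpose C"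
    by (simp add: outer_diff_scaleR sum.distrib sum_subtractf weighted_outer_sum_def
        sum_scaleR_matrix_mult_left sum_scaleR_matrix_mult_right matrix_mul_assoc)
  then show ?thesis by (simp add: assms)
qed

lemma bl_ratio_weighted_outer_sum:
  "bl_ratio v m c a = det (weighted_outer_sum v {1..m} a) / (\<Prod>i\<in>{1..m}. a i powr c i)"
  by (simp add: bl_ratio_def weighted_outer_sum_def)

lemma bl_ratio_pos:
  assumes "span (v ` {1..m}) = UNIV" "\<forall>i\<in>{1..m}. a i > 0"
  shows "bl_ratio v m c a > 0"
proof -
  have "det (weighted_outer_sum v {1..m} a) > 0"
    using assms by (intro pos_def_det_pos pos_def_weighted_outer_sum) simp_all
  moreover have "(\<Prod>i\<in>{1..m}. a i powr c i) > 0"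
    using assms(2) by (intro prod_pos) force
  ultimately show ?thesis by (simp add: bl_ratio_weighted_outer_sum)
qed

lemma D_const_le_bl_ratio:
  assumes "span (v ` {1..m}) = UNIV" "\<forall>i\<in>{1..m}. a i > 0"
  shows "D_const v m c \<le> bl_ratio v m c a"
  unfolding D_const_def
proof (rule cInf_lower)
  show "bdd_below {bl_ratio v m c a |a. \<forall>i\<in>{1..m}. 0 < a i}"
    using bl_ratio_pos[OF assms(1)] by (intro bdd_belowI[of _ 0]) (auto intro: less_imp_le)
qed (use assms(2) in blast)

lemma det_minimizers_le_geometric_mean:
  assumes "span (v ` {1..m}) = UNIV"
    and "\<forall>i\<in>{1..m}. lam i > 0" "\<forall>i\<in>{1..m}. mu i > 0"
    and "bl_ratio v m c lam = D_const v m c" "bl_ratio v m c mu = D_const v m c"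
  shows "det (weighted_outer_sum v {1..m} lam) * det (weighted_outer_sum v {1..m} mu)
    \<le> (det (weighted_outer_sum v {1..m} (\<lambda>i. sqrt (lam i * mu i))))\<^sup>2"
proof -
  define D where "D = D_const v m c"
  define P where "P a = (\<Prod>i\<in>{1..m}. a i powr c i)" for a
  define nu where "nu i = sqrt (lam i * mu i)" for i
  have nu_pos: "\<forall>i\<in>{1..m}. nu i > 0" using assms(2,3) by (simp add: nu_def)
  have P_pos: "P a > 0" if "\<forall>i\<in>{1..m}. a i > 0" for a
    unfolding P_def using that by (intro prod_pos) force
  have det_eq: "det (weighted_outer_sum v {1..m} a) = bl_ratio v m c a * P a"
    if "\<forall>i\<in>{1..m}. a i > 0" for a
  proof -
    have "bl_ratio v m c a = det (weighted_outer_sum v {1..m} a) / P a"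
      by (simp add: bl_ratio_weighted_outer_sum P_def)
    with P_pos[OF that] show ?thesis by simp
  qed
  have "D > 0" using bl_ratio_pos[OF assms(1,2), of c] assms(4) by (simp add: D_def)
  have P_nu: "(P nu)\<^sup>2 = P lam * P mu"
  proof -
    have "(P nu)\<^sup>2 = (\<Prod>i\<in>{1..m}. (nu i powr c i)\<^sup>2)"
      by (simp add: P_def prod_power_distrib)
    also have "\<dots> = (\<Prod>i\<in>{1..m}. lam i powr c i * mu i powr c i)"
      using assms(2,3)
      by (intro prod.cong) (simp_all add: nu_def power2_eq_square powr_mult[symmetric] less_imp_le)
    also have "\<dots> = P lam * P mu" by (simp add: P_def prod.distrib)
    finally show ?thesis .
  qed
  have "det (weighted_outer_sum v {1..m} lam) * det (weighted_outer_sum v {1..m} mu) = (D * P nu)\<^sup>2"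
    unfolding det_eq[OF assms(2)] det_eq[OF assms(3)] assms(4,5) power_mult_distrib P_nu
    by (simp add: D_def power2_eq_square)
  also have "\<dots> \<le> (det (weighted_outer_sum v {1..m} nu))\<^sup>2"
  proof (rule power_mono)
    show "D * P nu \<le> det (weighted_outer_sum v {1..m} nu)"
      unfolding det_eq[OF nu_pos] D_def
      using D_const_le_bl_ratio[OF assms(1) nu_pos, of c] P_pos[OF nu_pos] by simp
    show "0 \<le> D * P nu" using \<open>D > 0\<close> P_pos[OF nu_pos] by simp
  qed
  finally show ?thesis by (simp only: nu_def[abs_def])
qed

lemma basis_family_insert_not_in_span:
  assumes "basis_family v (insert i K)" "i \<notin> K"
  shows "v i \<notin> span (v ` K)"
proof -
  have "v i \<notin> v ` K" using assms unfolding basis_family_def inj_on_def by blast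
  moreover have "independent (insert (v i) (v ` K))" using assms(1) unfolding basis_family_def by simp
  ultimately show ?thesis by (simp add: independent_insert)
qed

lemma bowtie_eigenvalue_eq:
  fixes v :: "nat \<Rightarrow> real^'n"
  assumes "linear f" and eig: "\<forall>k\<in>{1..m}. f (v k) = \<rho> k *\<^sub>R v k"
    and "bowtie v m i j" "i \<in> {1..m}" "j \<in> {1..m}"
  shows "\<rho> i = \<rho> j"
proof (rule ccontr)
  assume "\<rho> i \<noteq> \<rho> j"
  obtain K where K: "K \<subseteq> {1..m}" "i \<notin> K" "j \<notin> K"
    and basis_i: "basis_family v (insert i K)" and basis_j: "basis_family v (insert j K)"
    using assms(3) unfolding bowtie_def by blast
  let ?W = "span (v ` K)"
  have "f (v k) \<in> ?W" if "k \<in> K" for k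
  proof -
    have "f (v k) = \<rho> k *\<^sub>R v k" using that eig K(1) by auto
    then show ?thesis using that by (simp add: span_base span_mul)
  qed
  then have "f ` v ` K \<subseteq> ?W" by blast
  then have invariant: "f x \<in> ?W" if "x \<in> ?W" for x
    using that span_linear_image[OF \<open>linear f\<close>, of "v ` K"] span_mono[of "f ` v ` K" ?W]
    by (metis image_eqI span_span subsetD)
  have "v j \<in> span (insert (v i) (v ` K))" using basis_i unfolding basis_family_def by simp
  then obtain a where s_in_W: "v j - a *\<^sub>R v i \<in> ?W" by (auto simp: span_insert)
  define s where "s = v j - a *\<^sub>R v i"
  have "a \<noteq> 0"
    using s_in_W basis_family_insert_not_in_span[OF basis_j K(3)] by auto
  have vj: "v j = a *\<^sub>R v i + s" by (simp add: s_def)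
  have "\<rho> j *\<^sub>R (a *\<^sub>R v i + s) = a *\<^sub>R \<rho> i *\<^sub>R v i + f s"
  proof -
    have "\<rho> j *\<^sub>R v j = f (v j)" using eig assms(5) by simp
    also have "\<dots> = a *\<^sub>R f (v i) + f s"
      unfolding vj by (simp add: linear_add[OF \<open>linear f\<close>] linear_scale[OF \<open>linear f\<close>])
    also have "f (v i) = \<rho> i *\<^sub>R v i" using eig assms(4) by simp
    finally show ?thesis by (simp add: vj)
  qed
  then have "(a * (\<rho> i - \<rho> j)) *\<^sub>R v i = \<rho> j *\<^sub>R s - f s"
    by (simp add: algebra_simps)
  moreover have "\<rho> j *\<^sub>R s - f s \<in> ?W"
    using s_in_W invariant by (simp add: s_def span_diff span_mul)
  ultimately have "(a * (\<rho> i - \<rho> j)) *\<^sub>R v i \<in> ?W" by simp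
  then have "(1 / (a * (\<rho> i - \<rho> j))) *\<^sub>R (a * (\<rho> i - \<rho> j)) *\<^sub>R v i \<in> ?W"
    by (rule span_mul)
  then have "v i \<in> ?W"
    using \<open>a \<noteq> 0\<close> \<open>\<rho> i \<noteq> \<rho> j\<close> by simp
  then show False using basis_family_insert_not_in_span[OF basis_i K(2)] by simp
qed

lemma irreducible_family_eigenvalue_eq:
  fixes v :: "nat \<Rightarrow> real^'n"
  assumes "linear f" "\<forall>k\<in>{1..m}. f (v k) = \<rho> k *\<^sub>R v k"
    and "irreducible_family v m" "i \<in> {1..m}" "j \<in> {1..m}"
  shows "\<rho> i = \<rho> j"
proof -
  have "(\<lambda>a b. a \<in> {1..m} \<and> b \<in> {1..m} \<and> bowtie v m a b)\<^sup>*\<^sup>* i j"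
    using assms(3-5) unfolding irreducible_family_def by blast
  then show ?thesis
    by (induction rule: rtranclp_induct) (auto dest: bowtie_eigenvalue_eq[OF assms(1,2)])
qed

lemma outer_residuals_zero_of_det_le:
  fixes B N :: "real^'n^'n"
  assumes "pos_def B" "pos_def N" "transpose N = N" "B ** Bi = mat 1" "finite I"
    and decomposition: "A = N ** Bi ** N + (\<Sum>k\<in>I. outer (w k))"
    and det_le: "det A * det B \<le> (det N)\<^sup>2"
  shows "\<forall>k\<in>I. w k = 0"
proof -
  have pos: "pos_def (N ** Bi ** N)"
    using pos_def_congruence[OF pos_def_inverse[OF assms(1,4)] pos_def_imp_inj[OF assms(2)]]
    by (simp add: assms(3))
  have "det B * det Bi = 1" using assms(4) by (metis det_I det_mul)
  then have "(det N)\<^sup>2 = det (N ** Bi ** N) * det B"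
    by (simp add: det_mul power2_eq_square algebra_simps)
  with det_le pos_def_det_pos[OF assms(1)] have "det A \<le> det (N ** Bi ** N)"
    by simp
  then show ?thesis
    using det_less_det_add_sum_outer[OF pos assms(5)] decomposition by force
qed

lemma minimizers_common_eigenvectors:
  fixes v :: "nat \<Rightarrow> real^'n"
  assumes "span (v ` {1..m}) = UNIV"
    and lam: "\<forall>i\<in>{1..m}. lam i > 0" and mu: "\<forall>i\<in>{1..m}. mu i > 0"
    and "bl_ratio v m c lam = D_const v m c" "bl_ratio v m c mu = D_const v m c"
  shows "\<exists>C::real^'n^'n. \<forall>k\<in>{1..m}. C *v v k = sqrt (lam k / mu k) *\<^sub>R v k"
proof -
  define s where "s i = sqrt (lam i)" for i
  define t where "t i = sqrt (mu i)" for i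
  define A where "A = weighted_outer_sum v {1..m} (\<lambda>i. s i * s i)"
  define B where "B = weighted_outer_sum v {1..m} (\<lambda>i. t i * t i)"
  define N where "N = weighted_outer_sum v {1..m} (\<lambda>i. s i * t i)"
  have A: "A = weighted_outer_sum v {1..m} lam"
    and B: "B = weighted_outer_sum v {1..m} mu"
    and N: "N = weighted_outer_sum v {1..m} (\<lambda>i. sqrt (lam i * mu i))"
    unfolding A_def B_def N_def weighted_outer_sum_def using lam mu
    by (auto simp: s_def t_def real_sqrt_mult less_imp_le intro!: sum.cong)
  have "pos_def B" "pos_def N"
    unfolding B N using assms(1) lam mu by (auto intro!: pos_def_weighted_outer_sum)
  then obtain Bi where Bi: "B ** Bi = mat 1" "Bi ** B = mat 1"
    using pos_def_invertible unfolding invertible_def by blast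
  define C where "C = N ** Bi"
  define w where "w k = s k *\<^sub>R v k - t k *\<^sub>R (C *v v k)" for k
  have "C ** B = N" by (simp add: C_def matrix_mul_assoc[symmetric] Bi(2))
  then have "A = C ** N + (\<Sum>k\<in>{1..m}. outer (w k))"
    unfolding A_def B_def N_def w_def by (rule weighted_outer_sum_residual_decomposition)
  then have decomposition: "A = N ** Bi ** N + (\<Sum>k\<in>{1..m}. outer (w k))"
    by (simp add: C_def)
  have det_le: "det A * det B \<le> (det N)\<^sup>2"
    unfolding A B N by (rule det_minimizers_le_geometric_mean[OF assms])
  have "transpose N = N" by (simp add: N_def transpose_weighted_outer_sum)
  have "\<forall>k\<in>{1..m}. w k = 0"
    by (rule outer_residuals_zero_of_det_le[OF \<open>pos_def B\<close> \<open>pos_def N\<close>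
          \<open>transpose N = N\<close> Bi(1) _ decomposition det_le]) simp
  have "C *v v k = sqrt (lam k / mu k) *\<^sub>R v k" if "k \<in> {1..m}" for k
  proof -
    have "t k > 0" using that mu by (simp add: t_def)
    have eigen: "t k *\<^sub>R (C *v v k) = s k *\<^sub>R v k"
      using that \<open>\<forall>k\<in>{1..m}. w k = 0\<close> by (simp add: w_def)
    have "C *v v k = (1 / t k) *\<^sub>R (t k *\<^sub>R (C *v v k))" using \<open>t k > 0\<close> by simp
    also have "\<dots> = (s k / t k) *\<^sub>R v k" by (simp add: eigen)
    finally show ?thesis by (simp add: s_def t_def real_sqrt_divide)
  qed
  then show ?thesis by blast
qed

theorem proposition8:
  fixes v :: "nat \<Rightarrow> real^'n" and m :: nat and c lam mu :: "nat \<Rightarrow> real"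
  assumes "m \<ge> CARD('n)"
    and "\<forall>i\<in>{1..m}. v i \<noteq> 0"
    and "span (v ` {1..m}) = UNIV"
    and "irreducible_family v m"
    and "\<forall>i\<in>{1..m}. c i > 0"
    and "(\<Sum>i\<in>{1..m}. c i) = real CARD('n)"
    and "\<forall>i\<in>{1..m}. lam i > 0" and "\<forall>i\<in>{1..m}. mu i > 0"
    and "bl_ratio v m c lam = D_const v m c"
    and "bl_ratio v m c mu = D_const v m c"
  shows "\<exists>r::real. \<forall>i\<in>{1..m}. lam i = r * mu i"
proof -
  obtain C :: "real^'n^'n" where eigen: "\<forall>k\<in>{1..m}. C *v v k = sqrt (lam k / mu k) *\<^sub>R v k"
    using minimizers_common_eigenvectors[OF assms(3,7-10)] by blast
  have "CARD('n) > 0" by (rule finite_UNIV_card_ge_0) simp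
  with assms(1) have "1 \<le> m" by linarith
  then have "1 \<in> {1..m}" by simp
  have "lam i = lam 1 / mu 1 * mu i" if "i \<in> {1..m}" for i
  proof -
    have "sqrt (lam i / mu i) = sqrt (lam 1 / mu 1)"
      by (rule irreducible_family_eigenvalue_eq[OF matrix_vector_mul_linear eigen assms(4)])
        (use that \<open>1 \<in> {1..m}\<close> in simp_all)
    then have "lam i / mu i = lam 1 / mu 1" by simp
    moreover have "mu i > 0" using assms(8) that by blast
    ultimately show ?thesis by (simp add: field_simps)
  qed
  then show ?thesis by blast
qed

end
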